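(* Let $\Omega\subseteq\mathbb{R}^n$ be open, $u:\Omega\to\mathbb{R}^N$ continuous, $x\in\Omega$, $\xi\in\mathbb{S}^{N-1}$, $\eta\in\mathbb{S}^{N-1}$ with $\eta^\top\xi=0$, and $A$ a positive semidefinite symmetric $n\times n$ matrix. If $(P,\mathbf{X})\in J^{2,\xi}u(x)$ and $\big(\eta^\top P,\ \eta^\top\mathbf{X}-\frac12A\big)\in J^{2,+}(\eta^\top u)(x)$, then $(P,\mathbf{X}-\eta\otimes A)\in J^{2,\xi}u(x)$.
   Context: $\mathbf{X}=(\mathbf{X}_{\alpha ij})\in\mathbb{R}^N\otimes\mathbb{R}^{n\times n}_s$ is symmetric in $i,j$; $\mathbf{X}:z\otimes z$ has components $\sum_{ij}\mathbf{X}_{\alpha ij}z_iz_j$; $\eta^\top\mathbf{X}:=(\sum_\alpha\eta_\alpha\mathbf{X}_{\alpha ij})_{ij}$, $\eta^\top P\in\mathbb{R}^{1\times n}$, $\eta\otimes A:=(\eta_\alpha A_{ij})$. For $a,b\in\mathbb{R}^N$, $a\vee b:=\frac12(a\otimes b+b\otimes a)$; matrix inequalities in the sense of quadratic forms. Second contact jet: $J^{2,\xi}u(x)$ is the set of $(P,\mathbf{X})\in\mathbb{R}^{N\times n}\times(\mathbb{R}^N\otimes\mathbb{R}^{n\times n}_s)$ for which there is a continuous $T:\mathbb{R}^n\setminus\{0\}\to\mathbb{R}^{N\times N}_s$ with $|T(y)|\to0$ as $y\to0$ and $\xi\vee[u(z)-u(x)-P(z-x)-\frac12\mathbf{X}:(z-x)\otimes(z-x)]\le|z-x|^2T(z-x)$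 for $z\ne x$ near $x$. Scalar second superjet: for $v:\Omega\to\mathbb{R}$, $J^{2,+}v(x)$ is the set of $(p,Y)\in\mathbb{R}^{1\times n}\times\mathbb{R}^{n\times n}_s$ with $v(z)\le v(x)+p(z-x)+\frac12Y:(z-x)\otimes(z-x)+o(|z-x|^2)$ as $z\to x$. *)

theory Defs
  imports "HOL-Analysis.Analysis"
begin

text \<open>R^n = real^'n, R^N = real^'m. A matrix P in R^{N x n} is real^'n^'m (P $ alpha $ i).
 A tensor X in R^N (x) R^{n x n}_s is real^'n^'n^'m (X $ alpha $ i $ j).\<close>

definition sym_mat :: "real^'n^'n \<Rightarrow> bool" where
  "sym_mat A \<longleftrightarrow> transpose A = A"

definition sym_tensor :: "real^'n^'n^'m \<Rightarrow> bool" where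
  "sym_tensor X \<longleftrightarrow> (\<forall>\<alpha>. transpose (X $ \<alpha>) = X $ \<alpha>)"

definition tensor_quad :: "real^'n^'n^'m \<Rightarrow> real^'n \<Rightarrow> real^'m" where
  "tensor_quad X z = (\<chi> \<alpha>. z \<bullet> ((X $ \<alpha>) *v z))"

definition contract :: "real^'m \<Rightarrow> real^'n^'n^'m \<Rightarrow> real^'n^'n" where
  "contract \<eta> X = (\<chi> i j. \<Sum>\<alpha>\<in>UNIV. \<eta> $ \<alpha> * X $ \<alpha> $ i $ j)"

definition tens :: "real^'m \<Rightarrow> real^'n^'n \<Rightarrow> real^'n^'n^'m" where
  "tens \<eta> A = (\<chi> \<alpha> i j. \<eta> $ \<alpha> * A $ i $ j)"

definition sym_prod :: "real^'m \<Rightarrow> real^'m \<Rightarrow> real^'m^'m" where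
  "sym_prod a b = (\<chi> i j. (a $ i * b $ j + b $ i * a $ j) / 2)"

definition qf_le :: "real^'m^'m \<Rightarrow> real^'m^'m \<Rightarrow> bool" where
  "qf_le M M' \<longleftrightarrow> (\<forall>w. w \<bullet> (M *v w) \<le> w \<bullet> (M' *v w))"

definition contact_jet2 ::
  "(real^'n) set \<Rightarrow> (real^'n \<Rightarrow> real^'m) \<Rightarrow> real^'m \<Rightarrow> real^'n
     \<Rightarrow> ((real^'n^'m) \<times> (real^'n^'n^'m)) set" where
  "contact_jet2 \<Omega> u \<xi> x = {(P, X). sym_tensor X \<and>
     (\<exists>T :: real^'n \<Rightarrow> real^'m^'m.
        continuous_on (UNIV - {0}) T \<and> (\<forall>y. y \<noteq> 0 \<longrightarrow> transpose (T y) = T y) \<and>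
        (T \<longlongrightarrow> 0) (at 0) \<and>
        (\<exists>d>0. \<forall>z\<in>\<Omega>. z \<noteq> x \<and> dist z x < d \<longrightarrow>
           qf_le (sym_prod \<xi> (u z - u x - P *v (z - x) - (1/2) *\<^sub>R tensor_quad X (z - x)))
                 ((norm (z - x))\<^sup>2 *\<^sub>R T (z - x))))}"

definition superjet2 ::
  "(real^'n) set \<Rightarrow> (real^'n \<Rightarrow> real) \<Rightarrow> real^'n \<Rightarrow> ((real^'n) \<times> (real^'n^'n)) set" where
  "superjet2 \<Omega> v x = {(p, Y). sym_mat Y \<and>
     (\<forall>e>0. \<exists>d>0. \<forall>z\<in>\<Omega>. dist z x < d \<longrightarrow>
        v z \<le> v x + p \<bullet> (z - x) + (1/2) * ((z - x) \<bullet> (Y *v (z - x))) + e * (norm (z - x))\<^sup>2)}"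

end

theory Submission
  imports Defs
begin

text \<open>Write \<open>w\<close> for the second-order remainder of \<open>u\<close> against \<open>(P, X)\<close> and \<open>a = (z - x) \<bullet> A (z - x) \<ge> 0\<close>.
  Replacing \<open>X\<close> by \<open>X - \<eta> \<otimes> A\<close> turns \<open>w\<close> into \<open>w + (a/2) \<eta>\<close>. Testing the contact inequality on \<open>v\<close> and
  on its reflection in \<open>\<eta>\<^sup>\<bottom>\<close> shows that the new quadratic form exceeds the old bound by at most
  \<open>max 0 (\<eta> \<bullet> w + a/4) |v|\<^sup>2\<close>, and \<open>\<eta> \<bullet> w + a/4\<close> is exactly the remainder of the scalar function
  \<open>\<eta> \<bullet> u\<close> against \<open>(\<eta>\<^sup>T P, \<eta>\<^sup>T X - A/2)\<close>, whose positive part is \<open>o(|z - x|\<^sup>2)\<close> by the superjet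
  hypothesis. Since the contact jet only involves quadratic forms, the matrix weight may be taken scalar.\<close>

definition jet2_remainder ::
  "(real^'n \<Rightarrow> real^'m) \<Rightarrow> real^'n \<Rightarrow> real^'n^'m \<Rightarrow> real^'n^'n^'m \<Rightarrow> real^'n \<Rightarrow> real^'m" where
  "jet2_remainder u x P X z = u z - u x - P *v (z - x) - (1/2) *\<^sub>R tensor_quad X (z - x)"

lemma inner_tensor_quad: "\<eta> \<bullet> tensor_quad X h = h \<bullet> (contract \<eta> X *v h)"
proof -
  have "\<eta> \<bullet> tensor_quad X h = (\<Sum>a\<in>UNIV. \<Sum>i\<in>UNIV. \<Sum>j\<in>UNIV. \<eta>$a * (h$i * (X$a$i$j * h$j)))"
    by (simp add: tensor_quad_def inner_vec_def matrix_vector_mult_def sum_distrib_left)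
  also have "\<dots> = (\<Sum>i\<in>UNIV. \<Sum>j\<in>UNIV. \<Sum>a\<in>UNIV. \<eta>$a * (h$i * (X$a$i$j * h$j)))"
    by (subst sum.swap) (rule sum.cong[OF refl], rule sum.swap)
  also have "\<dots> = h \<bullet> (contract \<eta> X *v h)"
    by (simp add: contract_def inner_vec_def matrix_vector_mult_def sum_distrib_left
        sum_distrib_right mult_ac)
  finally show ?thesis .
qed

lemma tensor_quad_diff: "tensor_quad (X - Y) h = tensor_quad X h - tensor_quad Y h"
  by (simp add: tensor_quad_def vec_eq_iff matrix_vector_mult_diff_rdistrib inner_diff_right)

lemma tensor_quad_tens: "tensor_quad (tens \<eta> A) h = (h \<bullet> (A *v h)) *\<^sub>R \<eta>"
proof -
  have row: "tens \<eta> A $ \<alpha> = \<eta> $ \<alpha> *\<^sub>R A" for \<alpha>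
    by (simp add: tens_def vec_eq_iff)
  show ?thesis
    unfolding tensor_quad_def vec_eq_iff vec_lambda_beta row
    by (simp add: scaleR_matrix_vector_assoc[symmetric] mult.commute)
qed

lemma sym_tensor_diff_tens:
  assumes "sym_tensor X" and "sym_mat A"
  shows "sym_tensor (X - tens \<eta> A)"
  using assms unfolding sym_tensor_def sym_mat_def
  by (auto simp: transpose_def vec_eq_iff tens_def)

lemma quadratic_form_sym_prod: "v \<bullet> (sym_prod a b *v v) = (v \<bullet> a) * (v \<bullet> b)"
proof -
  let ?S = "\<lambda>a b. \<Sum>i\<in>UNIV. \<Sum>j\<in>UNIV. (v$i * a$i) * (v$j * b$j) / 2"
  have "v \<bullet> (sym_prod a b *v v) = ?S a b + ?S b a"
    by (simp add: sym_prod_def inner_vec_def matrix_vector_mult_def sum_distrib_left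
        add_divide_distrib distrib_left sum.distrib mult_ac)
  also have "?S b a = ?S a b"
    by (subst sum.swap) (simp add: mult_ac)
  also have "?S a b = (v \<bullet> a) * (v \<bullet> b) / 2"
    by (simp add: inner_vec_def sum_product sum_divide_distrib)
  finally show ?thesis by simp
qed

lemma quadratic_form_le_component_sum:
  fixes M :: "real^'n^'n"
  shows "v \<bullet> (M *v v) \<le> (\<Sum>i\<in>UNIV. \<Sum>j\<in>UNIV. \<bar>M $ i $ j\<bar>) * (v \<bullet> v)"
proof -
  have "v \<bullet> (M *v v) \<le> norm v * norm (M *v v)"
    using Cauchy_Schwarz_ineq2 abs_le_D1 by blast
  also have "norm (M *v v) \<le> onorm ((*v) M) * norm v"
    by (rule onorm) (rule matrix_vector_mul_bounded_linear)
  also have "onorm ((*v) M) \<le> (\<Sum>i\<in>UNIV. \<Sum>j\<in>UNIV. \<bar>M $ i $ j\<bar>)"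
    by (rule onorm_le_matrix_component_sum)
  finally show ?thesis
    by (simp add: mult_left_mono mult_right_mono power2_norm_eq_inner[symmetric]
        power2_eq_square mult_ac)
qed

lemma contact_jet2_iff_scalar:
  fixes u :: "real^'n \<Rightarrow> real^'m"
  shows "(P, X) \<in> contact_jet2 \<Omega> u \<xi> x \<longleftrightarrow> sym_tensor X \<and>
     (\<exists>g :: real^'n \<Rightarrow> real. continuous_on (UNIV - {0}) g \<and> (g \<longlongrightarrow> 0) (at 0) \<and>
        (\<exists>d>0. \<forall>z\<in>\<Omega>. z \<noteq> x \<and> dist z x < d \<longrightarrow>
           (\<forall>v. (v \<bullet> \<xi>) * (v \<bullet> jet2_remainder u x P X z) \<le> (norm (z - x))\<^sup>2 * g (z - x) * (v \<bullet> v))))"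
  (is "_ \<longleftrightarrow> _ \<and> (\<exists>g. ?scalar g)")
proof
  assume "(P, X) \<in> contact_jet2 \<Omega> u \<xi> x"
  then obtain T :: "real^'n \<Rightarrow> real^'m^'m" and d where
    sym: "sym_tensor X" and cont: "continuous_on (UNIV - {0}) T" and lim: "(T \<longlongrightarrow> 0) (at 0)" and
    "d > 0" and bound: "\<forall>z\<in>\<Omega>. z \<noteq> x \<and> dist z x < d \<longrightarrow>
       qf_le (sym_prod \<xi> (jet2_remainder u x P X z)) ((norm (z - x))\<^sup>2 *\<^sub>R T (z - x))"
    unfolding contact_jet2_def jet2_remainder_def by auto
  define g where "g h = (\<Sum>i\<in>UNIV. \<Sum>j\<in>UNIV. \<bar>T h $ i $ j\<bar>)" for h
  have "continuous_on (UNIV - {0}) g"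
    unfolding g_def by (intro continuous_intros cont)
  moreover have "(g \<longlongrightarrow> 0) (at 0)"
  proof -
    have "(g \<longlongrightarrow> (\<Sum>i\<in>UNIV. \<Sum>j\<in>UNIV. \<bar>(0 :: real^'m^'m) $ i $ j\<bar>)) (at 0)"
      unfolding g_def by (intro tendsto_intros lim)
    then show ?thesis by simp
  qed
  moreover have "(v \<bullet> \<xi>) * (v \<bullet> jet2_remainder u x P X z) \<le> (norm (z - x))\<^sup>2 * g (z - x) * (v \<bullet> v)"
    if "z \<in> \<Omega>" "z \<noteq> x" "dist z x < d" for z v
  proof -
    have "(v \<bullet> \<xi>) * (v \<bullet> jet2_remainder u x P X z) \<le> (norm (z - x))\<^sup>2 * (v \<bullet> (T (z - x) *v v))"
      using bound that unfolding qf_le_def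
      by (auto simp: quadratic_form_sym_prod scaleR_matrix_vector_assoc[symmetric])
    also have "\<dots> \<le> (norm (z - x))\<^sup>2 * (g (z - x) * (v \<bullet> v))"
      unfolding g_def by (intro mult_left_mono quadratic_form_le_component_sum) simp
    finally show ?thesis by (simp add: mult.assoc)
  qed
  ultimately show "sym_tensor X \<and> (\<exists>g. ?scalar g)"
    using sym \<open>d > 0\<close> by blast
next
  assume "sym_tensor X \<and> (\<exists>g. ?scalar g)"
  then obtain g d where sym: "sym_tensor X" and cont: "continuous_on (UNIV - {0}) g" and
    lim: "(g \<longlongrightarrow> 0) (at 0)" and "d > 0" and bound: "\<forall>z\<in>\<Omega>. z \<noteq> x \<and> dist z x < d \<longrightarrow>
       (\<forall>v. (v \<bullet> \<xi>) * (v \<bullet> jet2_remainder u x P X z) \<le> (norm (z - x))\<^sup>2 * g (z - x) * (v \<bullet> v))"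
    by blast
  define T where "T h = g h *\<^sub>R (mat 1 :: real^'m^'m)" for h :: "real^'n"
  have "continuous_on (UNIV - {0}) T"
    unfolding T_def by (intro continuous_intros cont)
  moreover have "(T \<longlongrightarrow> 0) (at 0)"
    using tendsto_scaleR[OF lim tendsto_const[of "mat 1 :: real^'m^'m"]] unfolding T_def by simp
  moreover have "transpose (T h) = T h" for h
    by (simp add: T_def transpose_scalar)
  moreover have "qf_le (sym_prod \<xi> (jet2_remainder u x P X z)) ((norm (z - x))\<^sup>2 *\<^sub>R T (z - x))"
    if "z \<in> \<Omega>" "z \<noteq> x" "dist z x < d" for z
    using bound that unfolding qf_le_def
    by (simp add: quadratic_form_sym_prod T_def scaleR_matrix_vector_assoc[symmetric])
  ultimately show "(P, X) \<in> contact_jet2 \<Omega> u \<xi> x"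
    using sym \<open>d > 0\<close> unfolding contact_jet2_def jet2_remainder_def by blast
qed

lemma inner_sq_orthonormal_pair_le:
  fixes v \<xi> \<eta> :: "'a::real_inner"
  assumes "\<xi> \<bullet> \<xi> = 1" "\<eta> \<bullet> \<eta> = 1" "\<eta> \<bullet> \<xi> = 0"
  shows "(v \<bullet> \<xi>)\<^sup>2 + (v \<bullet> \<eta>)\<^sup>2 \<le> v \<bullet> v"
proof -
  let ?r = "v - (v \<bullet> \<xi>) *\<^sub>R \<xi> - (v \<bullet> \<eta>) *\<^sub>R \<eta>"
  have "0 \<le> ?r \<bullet> ?r" by simp
  also have "?r \<bullet> ?r = v \<bullet> v - (v \<bullet> \<xi>)\<^sup>2 - (v \<bullet> \<eta>)\<^sup>2"
    using assms by (simp add: inner_diff_left inner_diff_right inner_commute power2_eq_square algebra_simps)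
  finally show ?thesis by simp
qed

text \<open>If \<open>(v \<bullet> \<xi>) (v \<bullet> \<eta>) < 0\<close> the shift only lowers the left-hand side. Otherwise apply the bound to the
  reflection \<open>v - 2 (v \<bullet> \<eta>) \<eta>\<close>, which has the same norm and \<open>\<xi>\<close>-component; the leftover cross term
  \<open>2 (v \<bullet> \<xi>) (v \<bullet> \<eta>) (\<eta> \<bullet> w + a/4)\<close> is absorbed by \<open>2 (v \<bullet> \<xi>) (v \<bullet> \<eta>) \<le> (v \<bullet> \<xi>)\<^sup>2 + (v \<bullet> \<eta>)\<^sup>2 \<le> v \<bullet> v\<close>.\<close>
lemma sym_prod_bound_shift:
  fixes \<xi> \<eta> w v :: "'a::real_inner"
  assumes \<xi>: "\<xi> \<bullet> \<xi> = 1" and \<eta>: "\<eta> \<bullet> \<eta> = 1" and orth: "\<eta> \<bullet> \<xi> = 0" and "a \<ge> 0"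
    and bound: "\<And>v. (v \<bullet> \<xi>) * (v \<bullet> w) \<le> c * (v \<bullet> v)"
    and excess: "\<eta> \<bullet> w + a/4 \<le> b" and "0 \<le> b"
  shows "(v \<bullet> \<xi>) * (v \<bullet> (w + (a/2) *\<^sub>R \<eta>)) \<le> (c + b) * (v \<bullet> v)"
proof -
  define s t where "s = v \<bullet> \<xi>" and "t = v \<bullet> \<eta>"
  have lhs: "(v \<bullet> \<xi>) * (v \<bullet> (w + (a/2) *\<^sub>R \<eta>)) = s * (v \<bullet> w) + a/2 * (s * t)"
    by (simp add: s_def t_def inner_add_right algebra_simps)
  show ?thesis
  proof (cases "s * t \<ge> 0")
    case True
    define v' where "v' = v - (2 * t) *\<^sub>R \<eta>"
    have "v' \<bullet> v' = v \<bullet> v"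
      using \<eta> by (simp add: v'_def t_def inner_diff_left inner_diff_right inner_commute algebra_simps)
    moreover have "v' \<bullet> \<xi> = s" "v' \<bullet> w = v \<bullet> w - 2 * t * (\<eta> \<bullet> w)"
      using orth by (simp_all add: v'_def s_def inner_diff_left)
    ultimately have reflected: "s * (v \<bullet> w - 2 * t * (\<eta> \<bullet> w)) \<le> c * (v \<bullet> v)"
      using bound[of v'] by simp
    have "2 * (s * t) \<le> v \<bullet> v"
      using sum_squares_bound[of s t] inner_sq_orthonormal_pair_le[OF \<xi> \<eta> orth, of v]
      by (simp add: s_def t_def power2_eq_square)
    then have "2 * (s * t) * b \<le> (v \<bullet> v) * b"
      using \<open>0 \<le> b\<close> by (rule mult_right_mono)
    moreover have "2 * (s * t) * (\<eta> \<bullet> w + a/4) \<le> 2 * (s * t) * b"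
      using True excess by (intro mult_left_mono) auto
    ultimately have cross: "2 * (s * t) * (\<eta> \<bullet> w + a/4) \<le> b * (v \<bullet> v)"
      by (simp add: mult.commute)
    have "(v \<bullet> \<xi>) * (v \<bullet> (w + (a/2) *\<^sub>R \<eta>)) = s * (v \<bullet> w - 2 * t * (\<eta> \<bullet> w)) + 2 * (s * t) * (\<eta> \<bullet> w + a/4)"
      unfolding lhs by (simp add: algebra_simps)
    also have "\<dots> \<le> c * (v \<bullet> v) + b * (v \<bullet> v)"
      using reflected cross by (rule add_mono)
    finally show ?thesis
      by (simp add: algebra_simps)
  next
    case False
    then have "a/2 * (s * t) \<le> 0"
      using \<open>a \<ge> 0\<close> by (simp add: mult_nonneg_nonpos)
    then have "(v \<bullet> \<xi>) * (v \<bullet> (w + (a/2) *\<^sub>R \<eta>)) \<le> s * (v \<bullet> w)"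
      unfolding lhs by linarith
    also have "\<dots> \<le> c * (v \<bullet> v)"
      using bound[of v] by (simp add: s_def)
    also have "\<dots> \<le> (c + b) * (v \<bullet> v)"
      using \<open>0 \<le> b\<close> by (simp add: distrib_right)
    finally show ?thesis .
  qed
qed

lemma superjet2_remainder_tendsto:
  assumes "(p, Y) \<in> superjet2 \<Omega> f x" and "open \<Omega>" and "x \<in> \<Omega>"
  shows "((\<lambda>h. max 0 (f (x + h) - f x - p \<bullet> h - (1/2) * (h \<bullet> (Y *v h))) / (norm h)\<^sup>2) \<longlongrightarrow> 0) (at 0)"
proof (rule tendstoI)
  fix e :: real
  assume "e > 0"
  from assms(2,3) obtain r where "r > 0" and ball: "ball x r \<subseteq> \<Omega>"
    using openE by blast
  from assms(1) \<open>e > 0\<close> obtain d where "d > 0" and d: "\<forall>z\<in>\<Omega>. dist z x < d \<longrightarrow>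
      f z \<le> f x + p \<bullet> (z - x) + (1/2) * ((z - x) \<bullet> (Y *v (z - x))) + (e/2) * (norm (z - x))\<^sup>2"
    unfolding superjet2_def by (auto dest!: spec[of _ "e/2"])
  let ?q = "\<lambda>h. max 0 (f (x + h) - f x - p \<bullet> h - (1/2) * (h \<bullet> (Y *v h))) / (norm h)\<^sup>2"
  show "\<forall>\<^sub>F h in at 0. dist (?q h) 0 < e"
    unfolding eventually_at
  proof (intro exI[of _ "min d r"] conjI ballI impI allI)
    fix h :: "real^'a"
    assume h: "h \<noteq> 0 \<and> dist h 0 < min d r"
    then have "x + h \<in> \<Omega>"
      using ball by (auto simp: dist_norm)
    with d h have "f (x + h) - f x - p \<bullet> h - (1/2) * (h \<bullet> (Y *v h)) \<le> (e/2) * (norm h)\<^sup>2"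
      by (auto simp: dist_norm)
    moreover have "(norm h)\<^sup>2 > 0"
      using h by simp
    ultimately have "?q h \<le> e/2"
      using \<open>e > 0\<close> by (simp add: divide_le_eq max_def)
    moreover have "0 \<le> ?q h"
      by simp
    ultimately show "dist (?q h) 0 < e"
      using \<open>e > 0\<close> unfolding dist_real_def by linarith
  qed (use \<open>d > 0\<close> \<open>r > 0\<close> in simp)
qed

text \<open>The weight is built from a continuous extension of \<open>f\<close> beyond a closed ball, since the contact jet
  asks for continuity on all of \<open>UNIV - {0}\<close>.\<close>
lemma superjet2_continuous_weight:
  fixes f :: "real^'n \<Rightarrow> real"
  assumes "(p, Y) \<in> superjet2 \<Omega> f x" and "open \<Omega>" and "x \<in> \<Omega>" and "continuous_on \<Omega> f"
  obtains r k where "r > 0" and "continuous_on (UNIV - {0}) k" and "(k \<longlongrightarrow> 0) (at 0)"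
    and "\<And>h. 0 \<le> k h"
    and "\<And>h. h \<noteq> 0 \<Longrightarrow> norm h \<le> r \<Longrightarrow> f (x + h) - f x - p \<bullet> h - (1/2) * (h \<bullet> (Y *v h)) \<le> (norm h)\<^sup>2 * k h"
proof -
  from assms(2,3) obtain r where "r > 0" and cball: "cball x r \<subseteq> \<Omega>"
    using open_contains_cball by blast
  obtain f\<^sub>e where f\<^sub>e_cont: "continuous_on UNIV f\<^sub>e" and f\<^sub>e_eq: "\<And>z. z \<in> cball x r \<Longrightarrow> f\<^sub>e z = f z"
    using Tietze_unbounded[of "cball x r" f UNIV] continuous_on_subset[OF assms(4) cball] by auto
  define k where "k h = max 0 (f\<^sub>e (x + h) - f x - p \<bullet> h - (1/2) * (h \<bullet> (Y *v h))) / (norm h)\<^sup>2" for h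
  have "continuous_on (UNIV - {0}) k"
    unfolding k_def by (intro continuous_intros continuous_on_compose2[OF f\<^sub>e_cont]) auto
  moreover have "(k \<longlongrightarrow> 0) (at 0)"
  proof (rule Lim_transform_eventually[OF superjet2_remainder_tendsto[OF assms(1-3)]])
    show "\<forall>\<^sub>F h in at 0. max 0 (f (x + h) - f x - p \<bullet> h - (1/2) * (h \<bullet> (Y *v h))) / (norm h)\<^sup>2 = k h"
      unfolding eventually_at using \<open>r > 0\<close>
      by (intro exI[of _ r]) (auto simp: k_def f\<^sub>e_eq dist_norm)
  qed
  moreover have "f (x + h) - f x - p \<bullet> h - (1/2) * (h \<bullet> (Y *v h)) \<le> (norm h)\<^sup>2 * k h"
    if "h \<noteq> 0" "norm h \<le> r" for h
    using that by (simp add: k_def f\<^sub>e_eq dist_norm)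
  moreover have "0 \<le> k h" for h
    by (simp add: k_def)
  ultimately show ?thesis
    using that \<open>r > 0\<close> by blast
qed

lemma jet2_remainder_diff_tens:
  "jet2_remainder u x P (X - tens \<eta> A) z
     = jet2_remainder u x P X z + (((z - x) \<bullet> (A *v (z - x))) / 2) *\<^sub>R \<eta>"
  by (simp add: jet2_remainder_def tensor_quad_diff tensor_quad_tens scaleR_diff_right)

lemma inner_jet2_remainder:
  "\<eta> \<bullet> jet2_remainder u x P X (x + h) + (h \<bullet> (A *v h)) / 4
     = \<eta> \<bullet> u (x + h) - \<eta> \<bullet> u x - (\<eta> v* P) \<bullet> h - (1/2) * (h \<bullet> ((contract \<eta> X - (1/2) *\<^sub>R A) *v h))"
  by (simp add: jet2_remainder_def inner_diff_right inner_add_right dot_lmul_matrix inner_tensor_quad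
      matrix_vector_mult_diff_rdistrib scaleR_matrix_vector_assoc[symmetric] field_simps)

theorem lemma33:
  fixes \<Omega> :: "(real^'n) set" and u :: "real^'n \<Rightarrow> real^'m"
    and x :: "real^'n" and \<xi> \<eta> :: "real^'m" and A :: "real^'n^'n"
    and P :: "real^'n^'m" and X :: "real^'n^'n^'m"
  assumes "open \<Omega>" and "continuous_on \<Omega> u" and "x \<in> \<Omega>"
    and "norm \<xi> = 1" and "norm \<eta> = 1" and "\<eta> \<bullet> \<xi> = 0"
    and "sym_mat A" and "\<forall>v. 0 \<le> v \<bullet> (A *v v)"
    and "(P, X) \<in> contact_jet2 \<Omega> u \<xi> x"
    and "(\<eta> v* P, contract \<eta> X - (1/2) *\<^sub>R A) \<in> superjet2 \<Omega> (\<lambda>z. \<eta> \<bullet> u z) x"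
  shows "(P, X - tens \<eta> A) \<in> contact_jet2 \<Omega> u \<xi> x"
proof -
  from assms(9) obtain g d where sym: "sym_tensor X" and g_cont: "continuous_on (UNIV - {0}) g"
    and g_lim: "(g \<longlongrightarrow> 0) (at 0)" and "d > 0" and bound: "\<forall>z\<in>\<Omega>. z \<noteq> x \<and> dist z x < d \<longrightarrow>
       (\<forall>v. (v \<bullet> \<xi>) * (v \<bullet> jet2_remainder u x P X z) \<le> (norm (z - x))\<^sup>2 * g (z - x) * (v \<bullet> v))"
    unfolding contact_jet2_iff_scalar by blast
  have "continuous_on \<Omega> (\<lambda>z. \<eta> \<bullet> u z)"
    using assms(2) by (intro continuous_intros)
  with assms(10,1,3) obtain r k where "r > 0" and k_cont: "continuous_on (UNIV - {0}) k"
    and k_lim: "(k \<longlongrightarrow> 0) (at 0)" and "\<And>h. 0 \<le> k h" and excess: "\<And>h. h \<noteq> 0 \<Longrightarrow> norm h \<le> r \<Longrightarrow>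
      \<eta> \<bullet> u (x + h) - \<eta> \<bullet> u x - (\<eta> v* P) \<bullet> h - (1/2) * (h \<bullet> ((contract \<eta> X - (1/2) *\<^sub>R A) *v h))
        \<le> (norm h)\<^sup>2 * k h"
    by (rule superjet2_continuous_weight) blast
  have "(v \<bullet> \<xi>) * (v \<bullet> jet2_remainder u x P (X - tens \<eta> A) z)
          \<le> (norm (z - x))\<^sup>2 * (g (z - x) + k (z - x)) * (v \<bullet> v)"
    if "z \<in> \<Omega>" "z \<noteq> x" "dist z x < min d r" for z v
    unfolding jet2_remainder_diff_tens distrib_left
  proof (rule sym_prod_bound_shift)
    show "\<xi> \<bullet> \<xi> = 1" "\<eta> \<bullet> \<eta> = 1"
      using assms(4,5) by (simp_all add: power2_norm_eq_inner[symmetric])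
    show "\<eta> \<bullet> jet2_remainder u x P X z + ((z - x) \<bullet> (A *v (z - x))) / 4 \<le> (norm (z - x))\<^sup>2 * k (z - x)"
      using excess[of "z - x"] inner_jet2_remainder[of \<eta> u x P X "z - x" A] that
      by (simp add: dist_norm)
  qed (use assms(6,8) bound that \<open>\<And>h. 0 \<le> k h\<close> in auto)
  moreover have "continuous_on (UNIV - {0}) (\<lambda>h. g h + k h)"
    using g_cont k_cont by (rule continuous_on_add)
  moreover have "((\<lambda>h. g h + k h) \<longlongrightarrow> 0) (at 0)"
    using g_lim k_lim by (rule tendsto_add_zero)
  ultimately show ?thesis
    unfolding contact_jet2_iff_scalar using sym_tensor_diff_tens[OF sym assms(7)] \<open>d > 0\<close> \<open>r > 0\<close>
    by (intro conjI exI[of _ "\<lambda>h. g h + k h"] exI[of _ "min d r"]) auto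
qed

end
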